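(* Let $m,n$ be relatively prime natural numbers. Let $J$ be the lattice of all clones $C\subseteq\mathcal{O}$ containing the binary addition modulo $mn$, and let $J_m$ (resp. $J_n$) be the lattice of all clones on $\mathbb{Z}_m$ (resp. $\mathbb{Z}_n$) containing the addition modulo $m$ (resp. modulo $n$). Then $J$ is isomorphic to the direct product $J_m\times J_n$, via the mutually inverse maps $C\mapsto (C_m,C_n)$ and $(D,E)\mapsto D\times E$.
   Context: $\mathbb{Z}_k=\{0,\dots,k-1\}$, and $x \bmod k$ is the unique element of $\mathbb{Z}_k$ congruent to $x$ modulo $k$. $\mathcal{O}$ is the set of all finitary operations on $\mathbb{Z}_{mn}$ preserving the congruences $\equiv \pmod m$ and $\equiv\pmod n$. For $k$-ary $f\in\mathcal{O}$, $f_m$ is the operation on $\mathbb{Z}_m$ given by $f_m(x_1,\dots,x_k)=f(x_1,\dots,x_k)\bmod m$, similarly $f_n$. For $k$-ary operations $g$ on $\mathbb{Z}_m$ and $h$ on $\mathbb{Z}_n$, $g\times h$ is the $k$-ary operation on $\mathbb{Z}_{mn}$ whose value at $(x_1,\dots,x_k)$ is the unique element of $\mathbb{Z}_{mn}$ congruent to $g(x_1\bmod m,\dots,x_k\bmod m)$ modulo $m$ and to $h(x_1\bmod n,\dots,x_k\bmod n)$ modulo $n$. For a clone $C\subseteq \mathcal{O}$, $C_m=\{f_m\mid f\in C\}$, $C_n=\{f_n\mid f\in C\}$; for clones $D$ on $\mathbb{Z}_m$, $E$ on $\mathbb{Z}_n$, $D\times E=\{g\times h\mid g\in D, h\in E\text{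 of the same arity}\}$. *)

theory Defs
  imports Main
begin

text \<open>A k-ary operation on Z_N is represented as a pair (k, f) with
  f :: nat list => nat; f is canonical: outside of the tuples of length k
  with entries in Z_N it returns 0, so that equal operations are equal terms.\<close>

type_synonym operation = "nat \<times> (nat list \<Rightarrow> nat)"

definition valid :: "nat \<Rightarrow> nat \<Rightarrow> nat list \<Rightarrow> bool" where
  "valid N k xs \<longleftrightarrow> length xs = k \<and> (\<forall>x\<in>set xs. x < N)"

definition is_op :: "nat \<Rightarrow> operation \<Rightarrow> bool" where
  "is_op N p \<longleftrightarrow> fst p \<ge> 1 \<and> (\<forall>xs. valid N (fst p) xs \<longrightarrow> snd p xs < N)
     \<and> (\<forall>xs. \<not> valid N (fst p) xs \<longrightarrow> snd p xs = 0)"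

definition ops :: "nat \<Rightarrow> operation set" where
  "ops N = {p. is_op N p}"

definition proj :: "nat \<Rightarrow> nat \<Rightarrow> nat \<Rightarrow> operation" where
  "proj N k i = (k, \<lambda>xs. if valid N k xs then xs ! i else 0)"

definition compose :: "nat \<Rightarrow> operation \<Rightarrow> nat \<Rightarrow> operation list \<Rightarrow> operation" where
  "compose N f l gs = (l, \<lambda>xs. if valid N l xs then snd f (map (\<lambda>g. snd g xs) gs) else 0)"

definition clone :: "nat \<Rightarrow> operation set \<Rightarrow> bool" where
  "clone N C \<longleftrightarrow> C \<subseteq> ops N
     \<and> (\<forall>k i. 1 \<le> k \<longrightarrow> i < k \<longrightarrow> proj N k i \<in> C)
     \<and> (\<forall>f\<in>C. \<forall>l\<ge>1. \<forall>gs. length gs = fst f \<and> (\<forall>g\<in>set gs. g \<in> C \<and> fst g = l)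
            \<longrightarrow> compose N f l gs \<in> C)"

definition addop :: "nat \<Rightarrow> operation" where
  "addop N = (2, \<lambda>xs. if valid N 2 xs then (xs ! 0 + xs ! 1) mod N else 0)"

definition pres_cong :: "nat \<Rightarrow> nat \<Rightarrow> operation \<Rightarrow> bool" where
  "pres_cong N d p \<longleftrightarrow> (\<forall>xs ys. valid N (fst p) xs \<longrightarrow> valid N (fst p) ys \<longrightarrow>
      (\<forall>i<fst p. xs ! i mod d = ys ! i mod d) \<longrightarrow> snd p xs mod d = snd p ys mod d)"

definition Ocong :: "nat \<Rightarrow> nat \<Rightarrow> operation set" where
  "Ocong m n = {p. p \<in> ops (m * n) \<and> pres_cong (m * n) m p \<and> pres_cong (m * n) n p}"

definition restr :: "nat \<Rightarrow> operation \<Rightarrow> operation" where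
  "restr d p = (fst p, \<lambda>xs. if valid d (fst p) xs then snd p xs mod d else 0)"

definition prod_op :: "nat \<Rightarrow> nat \<Rightarrow> operation \<Rightarrow> operation \<Rightarrow> operation" where
  "prod_op m n g h = (fst g, \<lambda>xs. if valid (m * n) (fst g) xs then
      (THE z. z < m * n \<and> z mod m = snd g (map (\<lambda>x. x mod m) xs)
                        \<and> z mod n = snd h (map (\<lambda>x. x mod n) xs)) else 0)"

definition clone_prod :: "nat \<Rightarrow> nat \<Rightarrow> operation set \<Rightarrow> operation set \<Rightarrow> operation set" where
  "clone_prod m n D E = {prod_op m n g h | g h. g \<in> D \<and> h \<in> E \<and> fst g = fst h}"

definition JJ :: "nat \<Rightarrow> nat \<Rightarrow> operation set set" where
  "JJ m n = {C. clone (m * n) C \<and> C \<subseteq> Ocong m n \<and> addop (m * n) \<in> C}"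

definition Jk :: "nat \<Rightarrow> operation set set" where
  "Jk k = {D. clone k D \<and> addop k \<in> D}"

end

theory Submission
  imports Defs "HOL-Number_Theory.Cong"
begin

(* Reduction modulo a divisor d of N commutes with projections, composition and addition
  for operations preserving congruence mod d, so C_m and C_n are clones containing addition;
  by the Chinese remainder theorem an operation in O is the product of its two reductions,
  which makes D \<times> E a clone in J with (D \<times> E)_m = D and (D \<times> E)_n = E.
  The substantial point is C_m \<times> C_n = C, i.e. f_m \<times> g_n is in C for all f, g in C of the same
  arity. Take e = 1, e' = 0 (mod m) and e = 0, e' = 1 (mod n): the binary operation
  e x + e' y is a composite of additions and projections, and e f + e' g reduces to f_m
  modulo m and to g_n modulo n, hence equals f_m \<times> g_n. *)

section \<open>Chinese remainder theorem\<close>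

lemma crt_unique:
  fixes m n z w :: nat
  assumes "coprime m n" "z < m * n" "w < m * n" "z mod m = w mod m" "z mod n = w mod n"
  shows "z = w"
  using assms coprime_cong_mult_nat cong_less_modulus_unique_nat unfolding cong_def by blast

lemma crt_exists:
  fixes m n a b :: nat
  assumes "coprime m n" "0 < m" "0 < n"
  obtains z where "z < m * n" "z mod m = a mod m" "z mod n = b mod n"
proof -
  obtain x where x: "[x = a] (mod m)" "[x = b] (mod n)"
    using binary_chinese_remainder_nat[OF assms(1)] by blast
  have "x mod (m * n) mod m = a mod m" "x mod (m * n) mod n = b mod n"
    using x unfolding cong_def by (simp_all add: mod_mod_cancel)
  moreover have "x mod (m * n) < m * n" using assms by simp
  ultimately show thesis using that by blast
qed

lemma the_crt_eq:
  fixes m n :: nat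
  assumes "coprime m n" "z < m * n" "z mod m = a" "z mod n = b"
  shows "(THE z. z < m * n \<and> z mod m = a \<and> z mod n = b) = z"
  using assms crt_unique[OF assms(1)] by (intro the_equality) auto

section \<open>Reduction of operations modulo a divisor\<close>

lemma valid_mono: "valid d k xs \<Longrightarrow> d \<le> N \<Longrightarrow> valid N k xs"
  unfolding valid_def by auto

lemma valid_map_mod: "valid N k xs \<Longrightarrow> 0 < d \<Longrightarrow> valid d k (map (\<lambda>x. x mod d) xs)"
  unfolding valid_def by auto

lemma opsD:
  assumes "p \<in> ops N"
  shows ops_valid: "valid N (fst p) xs \<Longrightarrow> snd p xs < N"
    and ops_invalid: "\<not> valid N (fst p) xs \<Longrightarrow> snd p xs = 0"
    and ops_arity: "1 \<le> fst p"
  using assms unfolding ops_def is_op_def by auto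

lemma ops_eqI:
  assumes "p \<in> ops N" "q \<in> ops N" "fst p = fst q"
    and "\<And>xs. valid N (fst p) xs \<Longrightarrow> snd p xs = snd q xs"
  shows "p = q"
proof (rule prod_eqI)
  show "snd p = snd q"
  proof
    fix xs show "snd p xs = snd q xs"
      using assms ops_invalid[OF assms(1)] ops_invalid[OF assms(2)] by (cases "valid N (fst p) xs") auto
  qed
qed (fact assms(3))

lemma pres_cong_mod:
  assumes "pres_cong N d p" "valid N (fst p) xs" "0 < d" "d \<le> N"
  shows "snd p (map (\<lambda>x. x mod d) xs) mod d = snd p xs mod d"
proof -
  have "length xs = fst p" using assms(2) unfolding valid_def by simp
  then have "\<forall>i<fst p. map (\<lambda>x. x mod d) xs ! i mod d = xs ! i mod d" by simp
  then show ?thesis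
    using assms(1,2) valid_mono[OF valid_map_mod[OF assms(2,3)] assms(4)]
    unfolding pres_cong_def by blast
qed

lemma fst_restr [simp]: "fst (restr d p) = fst p"
  by (simp add: restr_def)

lemma snd_restr: "valid d (fst p) xs \<Longrightarrow> snd (restr d p) xs = snd p xs mod d"
  by (simp add: restr_def)

lemma restr_in_ops: "p \<in> ops N \<Longrightarrow> 0 < d \<Longrightarrow> restr d p \<in> ops d"
  unfolding ops_def is_op_def restr_def by auto

lemma fst_compose [simp]: "fst (compose N f l gs) = l"
  by (simp add: compose_def)

lemma snd_compose: "valid N l xs \<Longrightarrow> snd (compose N f l gs) xs = snd f (map (\<lambda>g. snd g xs) gs)"
  by (simp add: compose_def)

lemma valid_map_snd:
  assumes "\<forall>g\<in>set gs. g \<in> ops N \<and> fst g = l" "valid N l xs"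
  shows "valid N (length gs) (map (\<lambda>g. snd g xs) gs)"
  using assms ops_valid unfolding valid_def by fastforce

lemma compose_in_ops:
  assumes "f \<in> ops N" "\<forall>g\<in>set gs. g \<in> ops N \<and> fst g = l" "length gs = fst f" "1 \<le> l"
  shows "compose N f l gs \<in> ops N"
proof -
  have "snd f (map (\<lambda>g. snd g xs) gs) < N" if "valid N l xs" for xs
  proof (rule ops_valid[OF assms(1)])
    show "valid N (fst f) (map (\<lambda>g. snd g xs) gs)"
      using valid_map_snd[OF assms(2) that] assms(3) by simp
  qed
  then show ?thesis using assms(4) unfolding ops_def is_op_def compose_def by simp
qed

lemma pres_cong_compose:
  assumes "f \<in> ops N" "pres_cong N d f" "length gs = fst f"
    and "\<forall>g\<in>set gs. g \<in> ops N \<and> fst g = l \<and> pres_cong N d g"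
  shows "pres_cong N d (compose N f l gs)"
  unfolding pres_cong_def fst_compose
proof (intro allI impI)
  fix xs ys assume xs: "valid N l xs" and ys: "valid N l ys"
    and eq: "\<forall>i<l. xs ! i mod d = ys ! i mod d"
  have gs: "\<forall>g\<in>set gs. g \<in> ops N \<and> fst g = l" using assms(4) by blast
  have "snd g xs mod d = snd g ys mod d" if "g \<in> set gs" for g
  proof -
    have "pres_cong N d g" "fst g = l" using assms(4) that by auto
    then show ?thesis using xs ys eq unfolding pres_cong_def by blast
  qed
  then have "\<forall>i<fst f. map (\<lambda>g. snd g xs) gs ! i mod d = map (\<lambda>g. snd g ys) gs ! i mod d"
    using assms(3) by auto
  then have "snd f (map (\<lambda>g. snd g xs) gs) mod d = snd f (map (\<lambda>g. snd g ys) gs) mod d"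
    using assms(2,3) valid_map_snd[OF gs xs] valid_map_snd[OF gs ys]
    unfolding pres_cong_def by metis
  then show "snd (compose N f l gs) xs mod d = snd (compose N f l gs) ys mod d"
    using xs ys by (simp add: snd_compose)
qed

lemma restr_compose:
  assumes "0 < d" "d \<le> N" "f \<in> ops N" "pres_cong N d f" "length gs = fst f"
    and gs: "\<forall>g\<in>set gs. g \<in> ops N \<and> fst g = l" and "1 \<le> l"
  shows "restr d (compose N f l gs) = compose d (restr d f) l (map (restr d) gs)"
proof (rule ops_eqI)
  show "restr d (compose N f l gs) \<in> ops d"
    using restr_in_ops compose_in_ops assms by blast
  show "compose d (restr d f) l (map (restr d) gs) \<in> ops d"
    using assms by (intro compose_in_ops restr_in_ops) (auto intro: restr_in_ops)
next
  fix xs assume "valid d (fst (restr d (compose N f l gs))) xs"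
  then have xs: "valid d l xs" by simp
  then have xsN: "valid N l xs" using valid_mono assms(2) by blast
  have vals: "valid N (fst f) (map (\<lambda>g. snd g xs) gs)"
    using valid_map_snd[OF gs xsN] assms(5) by simp
  have restr_vals: "map (\<lambda>g. snd g xs) (map (restr d) gs) = map (\<lambda>x. x mod d) (map (\<lambda>g. snd g xs) gs)"
    using xs gs by (auto simp: snd_restr)
  have "snd (restr d (compose N f l gs)) xs = snd f (map (\<lambda>g. snd g xs) gs) mod d"
    using xs xsN by (simp add: restr_def compose_def)
  also have "\<dots> = snd f (map (\<lambda>x. x mod d) (map (\<lambda>g. snd g xs) gs)) mod d"
    using pres_cong_mod[OF assms(4) vals assms(1,2)] by simp
  also have "\<dots> = snd (restr d f) (map (\<lambda>x. x mod d) (map (\<lambda>g. snd g xs) gs))"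
    using valid_map_mod[OF vals assms(1)] by (simp add: snd_restr)
  also have "\<dots> = snd (compose d (restr d f) l (map (restr d) gs)) xs"
    using xs by (simp only: snd_compose restr_vals)
  finally show "snd (restr d (compose N f l gs)) xs = snd (compose d (restr d f) l (map (restr d) gs)) xs" .
qed simp

lemma fst_proj [simp]: "fst (proj N k i) = k"
  by (simp add: proj_def)

lemma proj_in_ops: "1 \<le> k \<Longrightarrow> i < k \<Longrightarrow> proj N k i \<in> ops N"
  unfolding ops_def is_op_def proj_def valid_def by auto

lemma pres_cong_proj: "i < k \<Longrightarrow> pres_cong N d (proj N k i)"
  unfolding pres_cong_def proj_def by auto

lemma restr_proj: "d \<le> N \<Longrightarrow> i < k \<Longrightarrow> restr d (proj N k i) = proj d k i"
  unfolding restr_def proj_def valid_def by (auto simp: fun_eq_iff)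

section \<open>Linear operations\<close>

definition lincomb_op :: "nat \<Rightarrow> nat \<Rightarrow> nat \<Rightarrow> operation" where
  "lincomb_op N a b = (2, \<lambda>xs. if valid N 2 xs then (a * xs ! 0 + b * xs ! 1) mod N else 0)"

lemma addop_eq_lincomb_op: "addop N = lincomb_op N 1 1"
  by (simp add: addop_def lincomb_op_def fun_eq_iff)

lemma fst_lincomb_op [simp]: "fst (lincomb_op N a b) = 2"
  by (simp add: lincomb_op_def)

lemma lincomb_op_in_ops: "lincomb_op N a b \<in> ops N"
proof -
  have "0 < N" if "valid N 2 xs" for xs
    using that unfolding valid_def by (cases xs) auto
  then show ?thesis unfolding ops_def is_op_def lincomb_op_def by auto
qed

lemma lincomb_op_cong:
  assumes "a mod N = a' mod N" "b mod N = b' mod N"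
  shows "lincomb_op N a b = lincomb_op N a' b'"
proof -
  have lin: "(a * x + b * y) mod N = (a' * x + b' * y) mod N" for x y
    using assms by (intro mod_add_cong mod_mult_cong) simp_all
  show ?thesis unfolding lincomb_op_def by (simp only: lin)
qed

lemma pres_cong_lincomb_op:
  assumes "d dvd N"
  shows "pres_cong N d (lincomb_op N a b)"
  unfolding pres_cong_def fst_lincomb_op
proof (intro allI impI)
  fix xs ys assume "valid N 2 xs" "valid N 2 ys" and eq: "\<forall>i<2. xs ! i mod d = ys ! i mod d"
  moreover have "(a * xs ! 0 + b * xs ! 1) mod d = (a * ys ! 0 + b * ys ! 1) mod d"
    using eq by (intro mod_add_cong mod_mult_cong) auto
  ultimately show "snd (lincomb_op N a b) xs mod d = snd (lincomb_op N a b) ys mod d"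
    using assms by (simp add: lincomb_op_def mod_mod_cancel)
qed

lemma restr_lincomb_op:
  assumes "d dvd N" "0 < N"
  shows "restr d (lincomb_op N a b) = lincomb_op d a b"
proof -
  have "valid d 2 xs \<Longrightarrow> valid N 2 xs" for xs
    using valid_mono dvd_imp_le assms by blast
  then show ?thesis
    using assms unfolding restr_def lincomb_op_def by (auto simp: fun_eq_iff mod_mod_cancel)
qed

lemma snd_compose_lincomb_op:
  assumes "f \<in> ops N" "g \<in> ops N" "fst g = fst f" "valid N (fst f) xs"
  shows "snd (compose N (lincomb_op N a b) (fst f) [f, g]) xs = (a * snd f xs + b * snd g xs) mod N"
proof -
  have "valid N 2 [snd f xs, snd g xs]"
    using ops_valid assms unfolding valid_def by auto
  then show ?thesis using assms(4) by (simp add: snd_compose lincomb_op_def)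
qed

lemma compose_lincomb_op_in_ops:
  assumes "f \<in> ops N" "g \<in> ops N" "fst g = fst f"
  shows "compose N (lincomb_op N a b) (fst f) [f, g] \<in> ops N"
  using assms ops_arity[OF assms(1)] by (intro compose_in_ops lincomb_op_in_ops) auto

lemma compose_lincomb_op_1_0:
  assumes "f \<in> ops N" "g \<in> ops N" "fst g = fst f"
  shows "compose N (lincomb_op N 1 0) (fst f) [f, g] = f"
  by (rule ops_eqI[OF compose_lincomb_op_in_ops[OF assms] assms(1)])
    (simp_all add: snd_compose_lincomb_op[OF assms] ops_valid[OF assms(1)])

lemma compose_lincomb_op_0_1:
  assumes "f \<in> ops N" "g \<in> ops N" "fst g = fst f"
  shows "compose N (lincomb_op N 0 1) (fst f) [f, g] = g"
  by (rule ops_eqI[OF compose_lincomb_op_in_ops[OF assms] assms(2)])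
    (simp_all add: snd_compose_lincomb_op[OF assms] ops_valid[OF assms(2)] assms(3))

lemma restr_addop: "d dvd N \<Longrightarrow> 0 < N \<Longrightarrow> restr d (addop N) = addop d"
  by (simp add: addop_eq_lincomb_op restr_lincomb_op)

lemma restr_compose_lincomb_op:
  assumes "d dvd N" "0 < N" "f \<in> ops N" "g \<in> ops N" "fst g = fst f"
  shows "restr d (compose N (lincomb_op N a b) (fst f) [f, g])
    = compose d (lincomb_op d a b) (fst f) [restr d f, restr d g]"
proof -
  have "0 < d" "d \<le> N" using assms(1,2) by (auto intro: dvd_imp_le dvd_pos_nat)
  then show ?thesis
    using assms lincomb_op_in_ops pres_cong_lincomb_op ops_arity[OF assms(3)]
    by (simp add: restr_compose restr_lincomb_op)
qed

section \<open>Clones containing addition\<close>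

lemma cloneD:
  assumes "clone N C"
  shows clone_subset_ops: "C \<subseteq> ops N"
    and proj_in_clone: "1 \<le> k \<Longrightarrow> i < k \<Longrightarrow> proj N k i \<in> C"
    and compose_in_clone: "f \<in> C \<Longrightarrow> 1 \<le> l \<Longrightarrow> length gs = fst f
      \<Longrightarrow> \<forall>g\<in>set gs. g \<in> C \<and> fst g = l \<Longrightarrow> compose N f l gs \<in> C"
  using assms unfolding clone_def by blast+

lemma restr_compose_in_clone:
  assumes "clone d D" "0 < d" "d \<le> N" "f \<in> ops N" "pres_cong N d f" "restr d f \<in> D"
    and "1 \<le> l" "length gs = fst f" "\<forall>g\<in>set gs. g \<in> ops N \<and> fst g = l \<and> restr d g \<in> D"
  shows "restr d (compose N f l gs) \<in> D"
proof -
  have "restr d (compose N f l gs) = compose d (restr d f) l (map (restr d) gs)"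
    using assms by (intro restr_compose) auto
  also have "\<dots> \<in> D"
    using assms by (intro compose_in_clone) auto
  finally show ?thesis .
qed

lemma lincomb_op_Suc_in_clone:
  assumes C: "clone N C" "addop N \<in> C" and "0 < N" and "lincomb_op N a b \<in> C"
  shows "lincomb_op N (Suc a) b \<in> C" "lincomb_op N a (Suc b) \<in> C"
proof -
  have step: "compose N (addop N) 2 [lincomb_op N a b, proj N 2 i] \<in> C" if "i < 2" for i
  proof (rule compose_in_clone[OF C])
    show "\<forall>g\<in>set [lincomb_op N a b, proj N 2 i]. g \<in> C \<and> fst g = 2"
      using assms(4) proj_in_clone[OF C(1), of 2 i] that by simp
  qed (simp_all add: addop_eq_lincomb_op)
  moreover have "compose N (addop N) 2 [lincomb_op N a b, proj N 2 0] = lincomb_op N (Suc a) b"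
    and "compose N (addop N) 2 [lincomb_op N a b, proj N 2 1] = lincomb_op N a (Suc b)"
    unfolding compose_def addop_def lincomb_op_def proj_def using \<open>0 < N\<close>
    by (auto simp: fun_eq_iff valid_def mod_add_left_eq mod_add_right_eq algebra_simps)
  ultimately show "lincomb_op N (Suc a) b \<in> C" "lincomb_op N a (Suc b) \<in> C"
    using step[of 0] step[of 1] by simp_all
qed

lemma lincomb_op_in_clone:
  assumes "clone N C" "addop N \<in> C" "0 < N"
  shows "lincomb_op N a b \<in> C"
proof -
  have pos: "lincomb_op N (Suc a') (Suc b') \<in> C" for a' b'
  proof (induction a')
    case 0
    show ?case
    proof (induction b')
      case 0
      then show ?case using assms(2) by (simp add: addop_eq_lincomb_op)
    next
      case (Suc b')
      then show ?case using lincomb_op_Suc_in_clone[OF assms] by blast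
    qed
  next
    case (Suc a')
    then show ?case using lincomb_op_Suc_in_clone[OF assms] by blast
  qed
  \<comment> \<open>addition only generates positive coefficients\<close>
  have "lincomb_op N a b = lincomb_op N (a + N) (b + N)"
    by (rule lincomb_op_cong) simp_all
  moreover have "a + N = Suc (a + N - 1)" "b + N = Suc (b + N - 1)"
    using assms(3) by simp_all
  ultimately show ?thesis using pos by metis
qed

lemma clone_restr_image:
  assumes C: "clone N C" and d: "0 < d" "d \<le> N" and pres: "\<forall>p\<in>C. pres_cong N d p"
  shows "clone d (restr d ` C)"
  unfolding clone_def
proof (intro conjI allI impI ballI)
  show "restr d ` C \<subseteq> ops d"
    using clone_subset_ops[OF C] restr_in_ops d(1) by blast
next
  fix k i :: nat assume "1 \<le> k" "i < k"
  then show "proj d k i \<in> restr d ` C"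
    using proj_in_clone[OF C] restr_proj[OF d(2)] by (metis image_eqI)
next
  fix f' l gs' assume f': "f' \<in> restr d ` C" and l: "1 \<le> l"
    and gs': "length gs' = fst f' \<and> (\<forall>g\<in>set gs'. g \<in> restr d ` C \<and> fst g = l)"
  obtain f where f: "f \<in> C" "f' = restr d f" using f' by blast
  have "gs' \<in> lists (restr d ` C)" using gs' by auto
  then obtain gs where gs: "gs \<in> lists C" "gs' = map (restr d) gs"
    by (auto simp: lists_image)
  have len: "length gs = fst f" and ar: "\<forall>g\<in>set gs. g \<in> C \<and> fst g = l"
    using gs gs' f by auto
  have "compose N f l gs \<in> C"
    using compose_in_clone[OF C f(1) l len ar] .
  moreover have "restr d (compose N f l gs) = compose d f' l gs'"
    unfolding f(2) gs(2)
    using clone_subset_ops[OF C] f(1) pres len ar l by (intro restr_compose[OF d]) auto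
  ultimately show "compose d f' l gs' \<in> restr d ` C" by (metis image_eqI)
qed

lemma restr_image_in_Jk:
  assumes "clone N C" "addop N \<in> C" "\<forall>p\<in>C. pres_cong N d p" "d dvd N" "0 < N"
  shows "restr d ` C \<in> Jk d"
proof -
  have "0 < d" "d \<le> N" using assms(4,5) by (auto intro: dvd_imp_le dvd_pos_nat)
  then have "clone d (restr d ` C)" using clone_restr_image assms(1,3) by blast
  moreover have "addop d \<in> restr d ` C"
    using restr_addop[OF assms(4,5)] assms(2) by (metis image_eqI)
  ultimately show ?thesis unfolding Jk_def by blast
qed

section \<open>Products of operations and of clones\<close>

lemma fst_prod_op [simp]: "fst (prod_op m n g h) = fst g"
  by (simp add: prod_op_def)

lemma prod_op_commute:
  assumes "fst g = fst h"
  shows "prod_op n m h g = prod_op m n g h"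
proof -
  have "(z < m * n \<and> z mod n = b \<and> z mod m = a) \<longleftrightarrow> (z < m * n \<and> z mod m = a \<and> z mod n = b)"
    for z a b :: nat
    by auto
  then show ?thesis using assms unfolding prod_op_def by (simp add: mult.commute[of n m] cong: if_cong)
qed

lemma snd_prod_op:
  assumes cop: "coprime m n" and "0 < m" "0 < n"
    and g: "g \<in> ops m" and h: "h \<in> ops n" and "fst g = fst h" and xs: "valid (m * n) (fst g) xs"
  shows "snd (prod_op m n g h) xs < m * n"
    and "snd (prod_op m n g h) xs mod m = snd g (map (\<lambda>x. x mod m) xs)"
    and "snd (prod_op m n g h) xs mod n = snd h (map (\<lambda>x. x mod n) xs)"
proof -
  let ?a = "snd g (map (\<lambda>x. x mod m) xs)" and ?b = "snd h (map (\<lambda>x. x mod n) xs)"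
  have "?a < m" "?b < n"
    using ops_valid[OF g] ops_valid[OF h] valid_map_mod[OF xs] assms(2,3,6) by auto
  moreover obtain z where "z < m * n" "z mod m = ?a mod m" "z mod n = ?b mod n"
    using crt_exists[OF cop assms(2,3)] .
  ultimately have z: "z < m * n" "z mod m = ?a" "z mod n = ?b" by simp_all
  then have "snd (prod_op m n g h) xs = z"
    using xs the_crt_eq[OF cop z] by (simp add: prod_op_def)
  with z show "snd (prod_op m n g h) xs < m * n" "snd (prod_op m n g h) xs mod m = ?a"
      "snd (prod_op m n g h) xs mod n = ?b"
    by simp_all
qed

lemma pres_cong_prod_op:
  assumes "coprime m n" "0 < m" "0 < n" "g \<in> ops m" "h \<in> ops n" "fst g = fst h"
  shows "pres_cong (m * n) m (prod_op m n g h)"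
  unfolding pres_cong_def fst_prod_op
proof (intro allI impI)
  fix xs ys assume xs: "valid (m * n) (fst g) xs" and ys: "valid (m * n) (fst g) ys"
    and eq: "\<forall>i<fst g. xs ! i mod m = ys ! i mod m"
  have "map (\<lambda>x. x mod m) xs = map (\<lambda>x. x mod m) ys"
    using xs ys eq unfolding valid_def by (intro nth_equalityI) auto
  then show "snd (prod_op m n g h) xs mod m = snd (prod_op m n g h) ys mod m"
    using snd_prod_op(2)[OF assms xs] snd_prod_op(2)[OF assms ys] by simp
qed

lemma prod_op_in_Ocong:
  assumes "coprime m n" "0 < m" "0 < n" "g \<in> ops m" "h \<in> ops n" "fst g = fst h"
  shows "prod_op m n g h \<in> Ocong m n"
proof -
  have "prod_op m n g h \<in> ops (m * n)"
    using snd_prod_op(1)[OF assms] ops_arity[OF assms(4)]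
    unfolding ops_def is_op_def by (simp add: prod_op_def)
  moreover have "pres_cong (m * n) n (prod_op m n g h)"
    using pres_cong_prod_op[of n m h g] assms
    by (simp add: coprime_commute mult.commute prod_op_commute)
  ultimately show ?thesis using pres_cong_prod_op[OF assms] unfolding Ocong_def by blast
qed

lemma restr_prod_op:
  assumes "coprime m n" "0 < m" "0 < n" "g \<in> ops m" "h \<in> ops n" "fst g = fst h"
  shows "restr m (prod_op m n g h) = g"
proof (rule ops_eqI)
  show "restr m (prod_op m n g h) \<in> ops m"
    using prod_op_in_Ocong[OF assms] restr_in_ops assms(2) unfolding Ocong_def by blast
next
  fix xs assume "valid m (fst (restr m (prod_op m n g h))) xs"
  then have xs: "valid m (fst g) xs" by simp
  have "valid (m * n) (fst g) xs"
    using assms(3) by (intro valid_mono[OF xs]) simp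
  moreover have "map (\<lambda>x. x mod m) xs = xs"
    using xs unfolding valid_def by (intro map_idI) simp
  ultimately show "snd (restr m (prod_op m n g h)) xs = snd g xs"
    using snd_prod_op(2)[OF assms] xs by (simp add: snd_restr)
qed (use assms in simp_all)

lemma restr_prod_op_right:
  assumes "coprime m n" "0 < m" "0 < n" "g \<in> ops m" "h \<in> ops n" "fst g = fst h"
  shows "restr n (prod_op m n g h) = h"
  using restr_prod_op[of n m h g] assms by (simp add: coprime_commute prod_op_commute)

lemma prod_op_restr:
  assumes cop: "coprime m n" and m: "0 < m" and n: "0 < n" and p: "p \<in> Ocong m n"
  shows "prod_op m n (restr m p) (restr n p) = p"
proof (rule ops_eqI)
  have p_ops: "p \<in> ops (m * n)" and pres: "pres_cong (m * n) m p" "pres_cong (m * n) n p"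
    using p unfolding Ocong_def by auto
  have r: "restr m p \<in> ops m" "restr n p \<in> ops n"
    using restr_in_ops[OF p_ops] m n by auto
  show "prod_op m n (restr m p) (restr n p) \<in> ops (m * n)"
    using prod_op_in_Ocong[OF cop m n r] unfolding Ocong_def by simp
  fix xs assume "valid (m * n) (fst (prod_op m n (restr m p) (restr n p))) xs"
  then have xs: "valid (m * n) (fst p) xs" by simp
  have "fst (restr m p) = fst (restr n p)" "valid (m * n) (fst (restr m p)) xs"
    using xs by simp_all
  note val = snd_prod_op[OF cop m n r this]
  show "snd (prod_op m n (restr m p) (restr n p)) xs = snd p xs"
  proof (rule crt_unique[OF cop])
    show "snd (prod_op m n (restr m p) (restr n p)) xs mod m = snd p xs mod m"
      using val(2) pres_cong_mod[OF pres(1) xs m] valid_map_mod[OF xs m] m n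
      by (simp add: snd_restr)
    show "snd (prod_op m n (restr m p) (restr n p)) xs mod n = snd p xs mod n"
      using val(3) pres_cong_mod[OF pres(2) xs n] valid_map_mod[OF xs n] m n
      by (simp add: snd_restr)
  qed (use val(1) ops_valid[OF p_ops xs] in simp_all)
qed (use p in \<open>simp_all add: Ocong_def\<close>)

lemma clone_prod_commute: "clone_prod n m E D = clone_prod m n D E"
proof -
  have "clone_prod n m E D \<subseteq> clone_prod m n D E" for m n :: nat and D E
  proof
    fix p assume "p \<in> clone_prod n m E D"
    then obtain h g where "p = prod_op n m h g" "h \<in> E" "g \<in> D" "fst h = fst g"
      unfolding clone_prod_def by blast
    moreover have "p = prod_op m n g h"
      using calculation prod_op_commute[of g h] by simp
    ultimately show "p \<in> clone_prod m n D E"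
      unfolding clone_prod_def by fastforce
  qed
  then show ?thesis by blast
qed

lemma mem_clone_prod_iff:
  assumes cop: "coprime m n" and m: "0 < m" and n: "0 < n" and "D \<subseteq> ops m" "E \<subseteq> ops n"
  shows "p \<in> clone_prod m n D E \<longleftrightarrow> p \<in> Ocong m n \<and> restr m p \<in> D \<and> restr n p \<in> E"
proof
  assume "p \<in> clone_prod m n D E"
  then obtain g h where p: "p = prod_op m n g h" and gh: "g \<in> D" "h \<in> E" "fst g = fst h"
    unfolding clone_prod_def by blast
  then have "g \<in> ops m" "h \<in> ops n" using assms(4,5) by auto
  note gh_ops = cop m n this gh(3)
  show "p \<in> Ocong m n \<and> restr m p \<in> D \<and> restr n p \<in> E"
    unfolding p using prod_op_in_Ocong[OF gh_ops] restr_prod_op[OF gh_ops]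
      restr_prod_op_right[OF gh_ops] gh by simp
next
  assume p: "p \<in> Ocong m n \<and> restr m p \<in> D \<and> restr n p \<in> E"
  then have "p = prod_op m n (restr m p) (restr n p)"
    using prod_op_restr[OF cop m n] by simp
  then show "p \<in> clone_prod m n D E"
    unfolding clone_prod_def using p by (intro CollectI exI[of _ "restr m p"] exI[of _ "restr n p"]) simp
qed

lemma clone_prod_in_JJ:
  assumes cop: "coprime m n" and m: "0 < m" and n: "0 < n" and "D \<in> Jk m" "E \<in> Jk n"
  shows "clone_prod m n D E \<in> JJ m n"
proof -
  let ?N = "m * n" and ?P = "clone_prod m n D E"
  have D: "clone m D" "addop m \<in> D" and E: "clone n E" "addop n \<in> E"
    using assms(4,5) unfolding Jk_def by auto
  note mem = mem_clone_prod_iff[OF cop m n clone_subset_ops[OF D(1)] clone_subset_ops[OF E(1)]]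
  have le: "m \<le> ?N" "n \<le> ?N" and N: "0 < ?N" using m n by simp_all
  have "proj ?N k i \<in> ?P" if "1 \<le> k" "i < k" for k i
    using that le proj_in_ops pres_cong_proj restr_proj proj_in_clone[OF D(1)] proj_in_clone[OF E(1)]
    unfolding mem Ocong_def by auto
  moreover have "compose ?N f l gs \<in> ?P"
    if f: "f \<in> ?P" and l: "1 \<le> l" and len: "length gs = fst f"
      and gs: "\<forall>g\<in>set gs. g \<in> ?P \<and> fst g = l" for f l gs
  proof -
    have f': "f \<in> ops ?N" "pres_cong ?N m f" "pres_cong ?N n f" "restr m f \<in> D" "restr n f \<in> E"
      using f unfolding mem Ocong_def by auto
    have gs': "\<forall>g\<in>set gs. g \<in> ops ?N \<and> fst g = l \<and> pres_cong ?N m g \<and> pres_cong ?N n g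
        \<and> restr m g \<in> D \<and> restr n g \<in> E"
      using gs unfolding mem Ocong_def by auto
    have "compose ?N f l gs \<in> Ocong m n"
      unfolding Ocong_def using f' gs' l len
      by (auto intro!: compose_in_ops pres_cong_compose)
    moreover have "restr m (compose ?N f l gs) \<in> D" "restr n (compose ?N f l gs) \<in> E"
      using f' gs' l len le m n
      by (auto intro!: restr_compose_in_clone[OF D(1)] restr_compose_in_clone[OF E(1)])
    ultimately show ?thesis unfolding mem by blast
  qed
  moreover have "addop ?N \<in> ?P"
    using D(2) E(2) N unfolding mem Ocong_def addop_eq_lincomb_op
    by (simp add: lincomb_op_in_ops pres_cong_lincomb_op restr_lincomb_op)
  moreover have "?P \<subseteq> ops ?N"
    using mem unfolding Ocong_def by blast
  moreover have "?P \<subseteq> Ocong m n"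
    using mem by blast
  ultimately show ?thesis
    unfolding JJ_def clone_def by blast
qed

lemma restr_image_clone_prod:
  assumes cop: "coprime m n" and m: "0 < m" and n: "0 < n" and D: "clone m D" and E: "clone n E"
  shows "restr m ` clone_prod m n D E = D"
proof
  show "restr m ` clone_prod m n D E \<subseteq> D"
    using mem_clone_prod_iff[OF cop m n clone_subset_ops[OF D] clone_subset_ops[OF E]] by blast
next
  show "D \<subseteq> restr m ` clone_prod m n D E"
  proof
    fix g assume g: "g \<in> D"
    then have g_ops: "g \<in> ops m" using clone_subset_ops[OF D] by blast
    let ?h = "proj n (fst g) 0"
    have h: "?h \<in> E" using proj_in_clone[OF E] ops_arity[OF g_ops] by simp
    have "prod_op m n g ?h \<in> clone_prod m n D E"
      unfolding clone_prod_def using g h by fastforce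
    moreover have "restr m (prod_op m n g ?h) = g"
      using restr_prod_op[OF cop m n g_ops, of ?h] h clone_subset_ops[OF E] by auto
    ultimately show "g \<in> restr m ` clone_prod m n D E" by (metis image_eqI)
  qed
qed

lemma restr_image_clone_prod_right:
  assumes "coprime m n" "0 < m" "0 < n" "clone m D" "clone n E"
  shows "restr n ` clone_prod m n D E = E"
  using restr_image_clone_prod[of n m E D] assms by (simp add: coprime_commute clone_prod_commute)

lemma prod_op_restr_in_clone:
  assumes cop: "coprime m n" and m: "0 < m" and n: "0 < n" and "C \<in> JJ m n"
    and f: "f \<in> C" and g: "g \<in> C" and "fst f = fst g"
  shows "prod_op m n (restr m f) (restr n g) \<in> C"
proof -
  let ?N = "m * n"
  have C: "clone ?N C" "addop ?N \<in> C" "C \<subseteq> Ocong m n"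
    using assms(4) unfolding JJ_def by auto
  have fg: "f \<in> ops ?N" "g \<in> ops ?N" "fst g = fst f"
    using C(3) f g assms(7) unfolding Ocong_def by auto
  have N: "0 < ?N" using m n by simp
  obtain e where e: "e mod m = 1 mod m" "e mod n = 0"
    using crt_exists[OF cop m n, of 1 0] by (metis mod_0)
  obtain e' where e': "e' mod m = 0" "e' mod n = 1 mod n"
    using crt_exists[OF cop m n, of 0 1] by (metis mod_0)
  define R where "R = compose ?N (lincomb_op ?N e e') (fst f) [f, g]"
  have "R \<in> C"
    unfolding R_def using C(1,2) N f g fg(3) ops_arity[OF fg(1)]
    by (intro compose_in_clone lincomb_op_in_clone) auto
  have "restr m R = compose m (lincomb_op m 1 0) (fst f) [restr m f, restr m g]"
    unfolding R_def using restr_compose_lincomb_op[OF _ N fg] e(1) e'(1)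
    by (simp add: lincomb_op_cong[of e m 1 e' 0])
  also have "\<dots> = restr m f"
    using compose_lincomb_op_1_0[of "restr m f" m "restr m g"] restr_in_ops fg m by simp
  finally have Rm: "restr m R = restr m f" .
  have "restr n R = compose n (lincomb_op n 0 1) (fst f) [restr n f, restr n g]"
    unfolding R_def using restr_compose_lincomb_op[OF _ N fg] e(2) e'(2)
    by (simp add: lincomb_op_cong[of e n 0 e' 1])
  also have "\<dots> = restr n g"
    using compose_lincomb_op_0_1[of "restr n f" n "restr n g"] restr_in_ops fg n by simp
  finally have Rn: "restr n R = restr n g" .
  have "prod_op m n (restr m R) (restr n R) = R"
    using prod_op_restr[OF cop m n] \<open>R \<in> C\<close> C(3) by blast
  then show ?thesis using \<open>R \<in> C\<close> by (simp add: Rm Rn)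
qed

lemma clone_prod_restr_image:
  assumes cop: "coprime m n" and m: "0 < m" and n: "0 < n" and C: "C \<in> JJ m n"
  shows "clone_prod m n (restr m ` C) (restr n ` C) = C"
proof
  show "clone_prod m n (restr m ` C) (restr n ` C) \<subseteq> C"
  proof
    fix p assume "p \<in> clone_prod m n (restr m ` C) (restr n ` C)"
    then obtain f g where "p = prod_op m n (restr m f) (restr n g)" "f \<in> C" "g \<in> C"
        "fst (restr m f) = fst (restr n g)"
      unfolding clone_prod_def by blast
    then show "p \<in> C" using prod_op_restr_in_clone[OF assms] by simp
  qed
  show "C \<subseteq> clone_prod m n (restr m ` C) (restr n ` C)"
  proof
    fix f assume f: "f \<in> C"
    then have "f \<in> Ocong m n" using C unfolding JJ_def by blast
    then have "f = prod_op m n (restr m f) (restr n f)"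
      using prod_op_restr[OF cop m n] by simp
    then show "f \<in> clone_prod m n (restr m ` C) (restr n ` C)"
      unfolding clone_prod_def using f by fastforce
  qed
qed

lemma clone_prod_mono: "D \<subseteq> D' \<Longrightarrow> E \<subseteq> E' \<Longrightarrow> clone_prod m n D E \<subseteq> clone_prod m n D' E'"
  unfolding clone_prod_def by blast

lemma JJ_subset_iff_restr_image_subset:
  assumes "coprime m n" "0 < m" "0 < n" "C \<in> JJ m n" "C' \<in> JJ m n"
  shows "C \<subseteq> C' \<longleftrightarrow> restr m ` C \<subseteq> restr m ` C' \<and> restr n ` C \<subseteq> restr n ` C'"
proof
  assume "restr m ` C \<subseteq> restr m ` C' \<and> restr n ` C \<subseteq> restr n ` C'"
  then have "clone_prod m n (restr m ` C) (restr n ` C) \<subseteq> clone_prod m n (restr m ` C') (restr n ` C')"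
    by (simp add: clone_prod_mono)
  then show "C \<subseteq> C'"
    using assms by (simp add: clone_prod_restr_image)
qed (simp add: image_mono)

theorem theorem2p2:
  fixes m n :: nat
  assumes "coprime m n" and "0 < m" and "0 < n"
  shows "(\<forall>C\<in>JJ m n. restr m ` C \<in> Jk m \<and> restr n ` C \<in> Jk n)
    \<and> (\<forall>D\<in>Jk m. \<forall>E\<in>Jk n. clone_prod m n D E \<in> JJ m n)
    \<and> (\<forall>C\<in>JJ m n. clone_prod m n (restr m ` C) (restr n ` C) = C)
    \<and> (\<forall>D\<in>Jk m. \<forall>E\<in>Jk n. restr m ` clone_prod m n D E = D \<and> restr n ` clone_prod m n D E = E)
    \<and> (\<forall>C\<in>JJ m n. \<forall>C'\<in>JJ m n. C \<subseteq> C' \<longleftrightarrow> (restr m ` C \<subseteq> restr m ` C' \<and> restr n ` C \<subseteq> restr n ` C'))"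
proof (intro conjI ballI)
  fix C assume "C \<in> JJ m n"
  then have "clone (m * n) C" "addop (m * n) \<in> C"
    and "\<forall>p\<in>C. pres_cong (m * n) m p" "\<forall>p\<in>C. pres_cong (m * n) n p"
    unfolding JJ_def Ocong_def by auto
  with assms show "restr m ` C \<in> Jk m" "restr n ` C \<in> Jk n"
    by (simp_all add: restr_image_in_Jk)
next
  fix D E assume "D \<in> Jk m" "E \<in> Jk n"
  moreover from this have "clone m D" "clone n E" unfolding Jk_def by auto
  ultimately show "clone_prod m n D E \<in> JJ m n"
    and "restr m ` clone_prod m n D E = D" "restr n ` clone_prod m n D E = E"
    using assms by (simp_all add: clone_prod_in_JJ restr_image_clone_prod restr_image_clone_prod_right)
next
  fix C assume "C \<in> JJ m n"
  with assms show "clone_prod m n (restr m ` C) (restr n ` C) = C"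
    by (rule clone_prod_restr_image)
next
  fix C C' assume "C \<in> JJ m n" "C' \<in> JJ m n"
  with assms show "C \<subseteq> C' \<longleftrightarrow> restr m ` C \<subseteq> restr m ` C' \<and> restr n ` C \<subseteq> restr n ` C'"
    by (rule JJ_subset_iff_restr_image_subset)
qed

end
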